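(* Let $q\ge1$, $d=2^q$. Each of the following subspaces $W$ of $\mathcal{M}_d^{\otimes 2}$ satisfies $\varphi^{\otimes 2}(C)W\subseteq W$ for all $C\in\mathcal{C}_q$ (some of them may be $0$ for $q=1$): $V_{\mathrm{id}}=\mathrm{span}\{\sigma_0\otimes\sigma_0\}$, $V_{\mathrm r}=\mathrm{span}\{\sigma_0\otimes\tau:\tau\in\boldsymbol{\sigma}_q\}$, $V_{\mathrm l}=\mathrm{span}\{\tau\otimes\sigma_0:\tau\in\boldsymbol{\sigma}_q\}$, $V_{\mathrm d}=\mathrm{span}\{\tau\otimes\tau:\tau\in\boldsymbol{\sigma}_q\}$, $V_{[\mathrm S]}=\mathrm{span}\{S_{\sigma,\tau}:\tau\in\boldsymbol{\sigma}_q,\sigma\in\boldsymbol{C}_\tau\}$, $V_{\{\mathrm S\}}=\mathrm{span}\{S_{\sigma,\tau}:\tau\in\boldsymbol{\sigma}_q,\sigma\in\boldsymbol{N}_\tau\}$, $V_{[\mathrm A]}=\mathrm{span}\{A_{\sigma,\tau}:\tau\in\boldsymbol{\sigma}_q,\sigma\in\boldsymbol{C}_\tau\}$, $V_{\{\mathrm A\}}=\mathrm{span}\{A_{\sigma,\tau}:\tau\in\boldsymbol{\sigma}_q,\sigma\in\boldsymbol{N}_\tau\}$.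
   Context: $\mathcal{M}_d$ is the space of complex $d\times d$ matrices. $X,Y,Z$ are the single-qubit Pauli matrices; $\hat{\mathcal{P}}_q$ is the set of $q$-fold tensor products of elements of $\{\mathbb{1},X,Y,Z\}$. Set $\sigma_0=\mathbb{1}/\sqrt d$, $\boldsymbol{\sigma}_q=\{P/\sqrt d:P\in\hat{\mathcal P}_q\setminus\{\mathbb 1\}\}$. For $\tau\in\boldsymbol{\sigma}_q$: $\boldsymbol{N}_\tau=\{\sigma\in\boldsymbol{\sigma}_q:\sigma\tau+\tau\sigma=0\}$, $\boldsymbol{C}_\tau=\{\sigma\in\boldsymbol{\sigma}_q\setminus\{\tau\}:\sigma\tau=\tau\sigma\}$. For $\sigma\ne\tau$ in $\boldsymbol{\sigma}_q$, $S_{\sigma,\tau}=\frac{1}{\sqrt2}(\sigma\otimes\tau+\tau\otimes\sigma)$ and $A_{\sigma,\tau}=\frac{1}{\sqrt2}(\sigma\otimes\tau-\tau\otimes\sigma)$. The Pauli group $\mathcal{P}_q\subset U(2^q)$ consists of all $q$-fold tensor products of elements of the group generated by $X,Z,i\mathbb 1_2$; the Clifford group is $\mathcal{C}_q=\{U\in U(2^q):U\mathcal{P}_qU^\dagger\subseteq\mathcal{P}_q\}/U(1)$. The two-copy representation of $\mathcal C_q$ on $\mathcal{M}_d^{\otimes2}$ is given by $\varphi^{\otimes2}(C)(A\otimes B)=(CAC^\dagger)\otimes(CBC^\dagger)$, extended linearly (independent of the phase of $C$). *)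

theory Defs
  imports "Jordan_Normal_Form.Schur_Decomposition"
begin

(* Kronecker (tensor) product of matrices; M_d \<otimes> M_d is identified with M_{d^2} via it *)
definition kron :: "complex mat \<Rightarrow> complex mat \<Rightarrow> complex mat" where
  "kron A B = mat (dim_row A * dim_row B) (dim_col A * dim_col B)
     (\<lambda>(i,j). A $$ (i div dim_row B, j div dim_col B) * B $$ (i mod dim_row B, j mod dim_col B))"

definition pX :: "complex mat" where "pX = mat_of_rows_list 2 [[0,1],[1,0]]"
definition pY :: "complex mat" where "pY = mat_of_rows_list 2 [[0,-\<i>],[\<i>,0]]"
definition pZ :: "complex mat" where "pZ = mat_of_rows_list 2 [[1,0],[0,-1]]"

inductive_set pauli1_group :: "complex mat set" where
  one: "1\<^sub>m 2 \<in> pauli1_group"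
| genX: "pX \<in> pauli1_group"
| genZ: "pZ \<in> pauli1_group"
| geni: "\<i> \<cdot>\<^sub>m 1\<^sub>m 2 \<in> pauli1_group"
| mult: "a \<in> pauli1_group \<Longrightarrow> b \<in> pauli1_group \<Longrightarrow> a * b \<in> pauli1_group"

fun tensor_power_set :: "complex mat set \<Rightarrow> nat \<Rightarrow> complex mat set" where
  "tensor_power_set S 0 = {1\<^sub>m 1}"
| "tensor_power_set S (Suc q) = {kron a B | a B. a \<in> S \<and> B \<in> tensor_power_set S q}"

definition pauli_group :: "nat \<Rightarrow> complex mat set" where
  "pauli_group q = tensor_power_set pauli1_group q"

definition pauli_strings :: "nat \<Rightarrow> complex mat set" where
  "pauli_strings q = tensor_power_set {1\<^sub>m 2, pX, pY, pZ} q"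

definition unitary_mat :: "nat \<Rightarrow> complex mat \<Rightarrow> bool" where
  "unitary_mat n U \<longleftrightarrow> U \<in> carrier_mat n n \<and> mat_adjoint U * U = 1\<^sub>m n \<and> U * mat_adjoint U = 1\<^sub>m n"

(* representatives of the Clifford group C_q (the quotient by U(1) is irrelevant:
   the two-copy action does not depend on the phase) *)
definition clifford :: "nat \<Rightarrow> complex mat set" where
  "clifford q = {U. unitary_mat (2^q) U \<and>
       (\<forall>P \<in> pauli_group q. U * P * mat_adjoint U \<in> pauli_group q)}"

(* two-copy representation on M_d \<otimes> M_d \<cong> M_{d^2}: on A \<otimes> B it gives (CAC\<dagger>) \<otimes> (CBC\<dagger>) *)
definition two_copy :: "complex mat \<Rightarrow> complex mat \<Rightarrow> complex mat" where
  "two_copy C M = kron C C * M * mat_adjoint (kron C C)"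

definition sigma0 :: "nat \<Rightarrow> complex mat" where
  "sigma0 q = complex_of_real (1 / sqrt (2^q)) \<cdot>\<^sub>m 1\<^sub>m (2^q)"

definition sigmas :: "nat \<Rightarrow> complex mat set" where
  "sigmas q = (\<lambda>P. complex_of_real (1 / sqrt (2^q)) \<cdot>\<^sub>m P) ` (pauli_strings q - {1\<^sub>m (2^q)})"

definition N_set :: "nat \<Rightarrow> complex mat \<Rightarrow> complex mat set" where
  "N_set q \<tau> = {\<sigma> \<in> sigmas q. \<sigma> * \<tau> + \<tau> * \<sigma> = 0\<^sub>m (2^q) (2^q)}"

definition C_set :: "nat \<Rightarrow> complex mat \<Rightarrow> complex mat set" where
  "C_set q \<tau> = {\<sigma> \<in> sigmas q - {\<tau>}. \<sigma> * \<tau> = \<tau> * \<sigma>}"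

definition S_mat :: "complex mat \<Rightarrow> complex mat \<Rightarrow> complex mat" where
  "S_mat \<sigma> \<tau> = complex_of_real (1 / sqrt 2) \<cdot>\<^sub>m (kron \<sigma> \<tau> + kron \<tau> \<sigma>)"

definition A_mat :: "complex mat \<Rightarrow> complex mat \<Rightarrow> complex mat" where
  "A_mat \<sigma> \<tau> = complex_of_real (1 / sqrt 2) \<cdot>\<^sub>m (kron \<sigma> \<tau> - kron \<tau> \<sigma>)"

inductive_set mat_span :: "nat \<Rightarrow> complex mat set \<Rightarrow> complex mat set" for n S where
  zero: "0\<^sub>m n n \<in> mat_span n S"
| gen: "x \<in> S \<Longrightarrow> x \<in> mat_span n S"
| add: "x \<in> mat_span n S \<Longrightarrow> y \<in> mat_span n S \<Longrightarrow> x + y \<in> mat_span n S"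
| smult: "x \<in> mat_span n S \<Longrightarrow> c \<cdot>\<^sub>m x \<in> mat_span n S"

definition V_id :: "nat \<Rightarrow> complex mat set" where
  "V_id q = mat_span (4^q) {kron (sigma0 q) (sigma0 q)}"
definition V_r :: "nat \<Rightarrow> complex mat set" where
  "V_r q = mat_span (4^q) {kron (sigma0 q) \<tau> | \<tau>. \<tau> \<in> sigmas q}"
definition V_l :: "nat \<Rightarrow> complex mat set" where
  "V_l q = mat_span (4^q) {kron \<tau> (sigma0 q) | \<tau>. \<tau> \<in> sigmas q}"
definition V_d :: "nat \<Rightarrow> complex mat set" where
  "V_d q = mat_span (4^q) {kron \<tau> \<tau> | \<tau>. \<tau> \<in> sigmas q}"
definition V_S_comm :: "nat \<Rightarrow> complex mat set" where
  "V_S_comm q = mat_span (4^q) {S_mat \<sigma> \<tau> | \<sigma> \<tau>. \<tau> \<in> sigmas q \<and> \<sigma> \<in> C_set q \<tau>}"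
definition V_S_anti :: "nat \<Rightarrow> complex mat set" where
  "V_S_anti q = mat_span (4^q) {S_mat \<sigma> \<tau> | \<sigma> \<tau>. \<tau> \<in> sigmas q \<and> \<sigma> \<in> N_set q \<tau>}"
definition V_A_comm :: "nat \<Rightarrow> complex mat set" where
  "V_A_comm q = mat_span (4^q) {A_mat \<sigma> \<tau> | \<sigma> \<tau>. \<tau> \<in> sigmas q \<and> \<sigma> \<in> C_set q \<tau>}"
definition V_A_anti :: "nat \<Rightarrow> complex mat set" where
  "V_A_anti q = mat_span (4^q) {A_mat \<sigma> \<tau> | \<sigma> \<tau>. \<tau> \<in> sigmas q \<and> \<sigma> \<in> N_set q \<tau>}"

definition invariant_space :: "nat \<Rightarrow> complex mat set \<Rightarrow> bool" where
  "invariant_space q W \<longleftrightarrow> (\<forall>C \<in> clifford q. \<forall>M \<in> W. two_copy C M \<in> W)"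

end

theory Submission
  imports Defs
begin

text \<open>Conjugation by a Clifford unitary \<open>C\<close> is an algebra automorphism of \<open>\<M>\<^sub>d\<close> fixing
  \<open>\<sigma>\<^sub>0\<close>. It maps every normalized Pauli string to a nonzero multiple of a normalized Pauli string:
  Pauli strings go into the Pauli group, whose elements are phases times Pauli strings, and the
  image can be neither zero nor the identity. Being multiplicative and injective, conjugation preserves
  distinctness, commutation and anticommutation of such strings, so it permutes (up to scalars) each of
  the generating families \<open>{\<tau>}\<close>, \<open>{(\<sigma>,\<tau>) : \<sigma> \<in> C\<^sub>\<tau>}\<close> and
  \<open>{(\<sigma>,\<tau>) : \<sigma> \<in> N\<^sub>\<tau>}\<close>. Since \<open>\<phi>\<^sup>\<otimes>\<^sup>2(C)\<close> acts on
  \<open>A \<otimes> B\<close> as \<open>CAC\<^sup>\<dagger> \<otimes> CBC\<^sup>\<dagger>\<close>, it maps each generator of each space to a multiple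
  of a generator of the same space, and the spans are invariant by linearity.\<close>

lemma smult_smult_mat: "a \<cdot>\<^sub>m (b \<cdot>\<^sub>m A) = (a * b) \<cdot>\<^sub>m (A :: 'a :: semigroup_mult mat)"
  by (rule eq_matI) (auto simp: mult.assoc)

lemma one_smult_mat [simp]: "(1 :: 'a :: monoid_mult) \<cdot>\<^sub>m A = A"
  by (rule eq_matI) auto

lemma smult_mat_cancel: "(c :: 'a :: field) \<noteq> 0 \<Longrightarrow> c \<cdot>\<^sub>m A = c \<cdot>\<^sub>m B \<Longrightarrow> A = B"
  by (metis smult_smult_mat one_smult_mat field_class.field_inverse mult.commute)

lemma smult_minus_distrib_mat:
  "A \<in> carrier_mat n m \<Longrightarrow> B \<in> carrier_mat n m \<Longrightarrow> (c :: 'a :: ring) \<cdot>\<^sub>m (A - B) = c \<cdot>\<^sub>m A - c \<cdot>\<^sub>m B"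
  by (rule eq_matI) (auto simp: algebra_simps)

lemma smult_mult_smult_mat:
  assumes "A \<in> carrier_mat n k" "B \<in> carrier_mat k m"
  shows "(a \<cdot>\<^sub>m A) * (b \<cdot>\<^sub>m B) = (a * b) \<cdot>\<^sub>m (A * (B :: 'a :: comm_ring mat))"
  using mult_smult_assoc_mat[OF assms(1) smult_carrier_mat[OF assms(2)]] mult_smult_distrib[OF assms]
  by (simp add: smult_smult_mat)

lemma dim_mat_adjoint [simp]:
  "dim_row (mat_adjoint A) = dim_col A" "dim_col (mat_adjoint A) = dim_row A"
  unfolding mat_adjoint_def by auto

lemma index_mat_adjoint [simp]:
  "i < dim_col A \<Longrightarrow> j < dim_row A \<Longrightarrow> mat_adjoint A $$ (i,j) = conjugate (A $$ (j,i))"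
  unfolding mat_adjoint_def by (simp add: mat_of_rows_index)

section \<open>The Kronecker product\<close>

lemma div_mod_less_mult: "(i::nat) < a * b \<Longrightarrow> i div b < a \<and> i mod b < b"
  by (cases "b = 0") (auto simp: less_mult_imp_div_less)

lemma mult_add_less_mult: "(x::nat) < b \<Longrightarrow> y < d \<Longrightarrow> x * d + y < b * d"
proof -
  assume "x < b" "y < d"
  then have "x * d + y < (x + 1) * d" by simp
  also have "\<dots> \<le> b * d" using \<open>x < b\<close> by (intro mult_right_mono) auto
  finally show ?thesis .
qed

lemma dim_kron [simp]:
  "dim_row (kron A B) = dim_row A * dim_row B" "dim_col (kron A B) = dim_col A * dim_col B"
  unfolding kron_def by auto

lemma kron_carrier_mat [simp]:
  "A \<in> carrier_mat a b \<Longrightarrow> B \<in> carrier_mat c d \<Longrightarrow> kron A B \<in> carrier_mat (a * c) (b * d)"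
  by (metis dim_kron carrier_matD carrier_matI)

lemma index_kron:
  "i < dim_row A * dim_row B \<Longrightarrow> j < dim_col A * dim_col B \<Longrightarrow>
   kron A B $$ (i,j) = A $$ (i div dim_row B, j div dim_col B) * B $$ (i mod dim_row B, j mod dim_col B)"
  unfolding kron_def by auto

lemma index_kron_block:
  assumes "A \<in> carrier_mat a b" "B \<in> carrier_mat c d" "i < a" "j < b" "k < c" "l < d"
  shows "kron A B $$ (i * c + k, j * d + l) = A $$ (i,j) * B $$ (k,l)"
proof -
  have "i * c + k < a * c" "j * d + l < b * d" "(i * c + k) div c = i" "(i * c + k) mod c = k"
    "(j * d + l) div d = j" "(j * d + l) mod d = l"
    using assms by (auto simp: mult_add_less_mult)
  then show ?thesis using assms index_kron[of "i * c + k" A B "j * d + l"] by simp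
qed

lemma kron_smult_left: "kron (c \<cdot>\<^sub>m A) B = c \<cdot>\<^sub>m kron A B"
  by (rule eq_matI) (auto simp: index_kron div_mod_less_mult)

lemma kron_smult_right: "kron A (c \<cdot>\<^sub>m B) = c \<cdot>\<^sub>m kron A B"
  by (rule eq_matI) (auto simp: index_kron div_mod_less_mult)

lemma kron_smult_smult: "kron (a \<cdot>\<^sub>m A) (b \<cdot>\<^sub>m B) = (a * b) \<cdot>\<^sub>m kron A B"
  by (simp add: kron_smult_left kron_smult_right smult_smult_mat mult.commute)

lemma mat_adjoint_kron: "mat_adjoint (kron A B) = kron (mat_adjoint A) (mat_adjoint B)"
  by (rule eq_matI) (auto simp: index_kron div_mod_less_mult)

lemma kron_one_mat: "kron (1\<^sub>m a) (1\<^sub>m b) = (1\<^sub>m (a * b) :: complex mat)"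
  by (rule eq_matI) (auto simp: index_kron div_mod_less_mult, metis div_mult_mod_eq)

lemma sum_mult_split:
  fixes g :: "nat \<Rightarrow> 'a :: comm_monoid_add"
  shows "sum g {0..<b * d} = (\<Sum>x<b. \<Sum>y<d. g (x * d + y))"
proof -
  have "sum g {0..<b * d} = sum (\<lambda>(x,y). g (x * d + y)) ({..<b} \<times> {..<d})"
    by (rule sum.reindex_bij_witness[where i = "\<lambda>(x,y). x * d + y" and j = "\<lambda>k. (k div d, k mod d)"])
      (auto simp: div_mod_less_mult mult_add_less_mult)
  then show ?thesis by (simp add: sum.cartesian_product)
qed

lemma kron_mult_kron:
  assumes A: "A \<in> carrier_mat a b" and B: "B \<in> carrier_mat c d"
    and C: "C \<in> carrier_mat b e" and D: "D \<in> carrier_mat d f"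
  shows "kron A B * kron C D = kron (A * C) (B * D)"
proof (rule eq_matI)
  fix i j assume "i < dim_row (kron (A * C) (B * D))" "j < dim_col (kron (A * C) (B * D))"
  then have i: "i < a * c" and j: "j < e * f" using A B C D by auto
  then have ij: "i div c < a" "i mod c < c" "j div f < e" "j mod f < f" by (auto simp: div_mod_less_mult)
  have "(kron A B * kron C D) $$ (i,j) = (\<Sum>k\<in>{0..<b * d}. kron A B $$ (i,k) * kron C D $$ (k,j))"
    using A B C D i j by (auto simp: scalar_prod_def intro!: sum.cong)
  also have "\<dots> = (\<Sum>x<b. \<Sum>y<d. (A $$ (i div c, x) * C $$ (x, j div f)) * (B $$ (i mod c, y) * D $$ (y, j mod f)))"
    unfolding sum_mult_split
  proof (intro sum.cong refl)
    fix x y assume "x \<in> {..<b}" "y \<in> {..<d}"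
    then have xy: "x * d + y < b * d" "(x * d + y) div d = x" "(x * d + y) mod d = y"
      by (auto simp: mult_add_less_mult)
    have "kron A B $$ (i, x * d + y) = A $$ (i div c, x) * B $$ (i mod c, y)"
      using index_kron[of i A B "x * d + y"] A B i xy by simp
    moreover have "kron C D $$ (x * d + y, j) = C $$ (x, j div f) * D $$ (y, j mod f)"
      using index_kron[of "x * d + y" C D j] C D j xy by simp
    ultimately show "kron A B $$ (i, x * d + y) * kron C D $$ (x * d + y, j)
      = (A $$ (i div c, x) * C $$ (x, j div f)) * (B $$ (i mod c, y) * D $$ (y, j mod f))"
      by (simp only: ac_simps)
  qed
  also have "\<dots> = (\<Sum>x<b. A $$ (i div c, x) * C $$ (x, j div f)) * (\<Sum>y<d. B $$ (i mod c, y) * D $$ (y, j mod f))"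
    by (simp only: sum_product)
  also have "\<dots> = (A * C) $$ (i div c, j div f) * (B * D) $$ (i mod c, j mod f)"
    using A B C D ij by (auto simp: scalar_prod_def atLeast0LessThan)
  also have "\<dots> = kron (A * C) (B * D) $$ (i,j)"
    using index_kron[of i "A * C" "B * D" j] A B C D i j by simp
  finally show "(kron A B * kron C D) $$ (i,j) = kron (A * C) (B * D) $$ (i,j)" .
qed (use A B C D in auto)

lemma kron_eq_kron_right_factor:
  assumes A: "A \<in> carrier_mat a b" "A' \<in> carrier_mat a b" and B: "B \<in> carrier_mat c d" "B' \<in> carrier_mat c d"
    and eq: "kron A B = kron A' B'" and i: "i < a" "j < b" and nz: "A $$ (i,j) \<noteq> 0"
  shows "B = (A' $$ (i,j) / A $$ (i,j)) \<cdot>\<^sub>m B'"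
proof (rule eq_matI)
  fix k l assume "k < dim_row ((A' $$ (i,j) / A $$ (i,j)) \<cdot>\<^sub>m B')" "l < dim_col ((A' $$ (i,j) / A $$ (i,j)) \<cdot>\<^sub>m B')"
  then have kl: "k < c" "l < d" using B by auto
  have "A $$ (i,j) * B $$ (k,l) = A' $$ (i,j) * B' $$ (k,l)"
    using index_kron_block[OF A(1) B(1) i kl] index_kron_block[OF A(2) B(2) i kl] eq by simp
  then show "B $$ (k,l) = ((A' $$ (i,j) / A $$ (i,j)) \<cdot>\<^sub>m B') $$ (k,l)"
    using nz kl B by (simp add: field_simps)
qed (use B in auto)

lemma kron_eq_kron_cancel_right:
  assumes A: "A \<in> carrier_mat a b" "A' \<in> carrier_mat a b" and B: "B \<in> carrier_mat c d"
    and eq: "kron A B = kron A' B" and kl: "k < c" "l < d" and nz: "B $$ (k,l) \<noteq> 0"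
  shows "A = A'"
proof (rule eq_matI)
  fix i j assume "i < dim_row A'" "j < dim_col A'"
  then have ij: "i < a" "j < b" using A by auto
  show "A $$ (i,j) = A' $$ (i,j)"
    using index_kron_block[OF A(1) B ij kl] index_kron_block[OF A(2) B ij kl] eq nz by simp
qed (use A in auto)

section \<open>Pauli matrices and Pauli strings\<close>

definition pauli_matrices :: "complex mat set" where
  "pauli_matrices = {1\<^sub>m 2, pX, pY, pZ}"

lemmas pauli_defs = pX_def pY_def pZ_def mat_of_rows_list_def

lemma pauli_matrices_carrier: "a \<in> pauli_matrices \<Longrightarrow> a \<in> carrier_mat 2 2"
  unfolding pauli_matrices_def pauli_defs by (auto intro!: carrier_matI)

lemma pauli_mult_table:
  "pX * pX = 1\<^sub>m 2" "pY * pY = 1\<^sub>m 2" "pZ * pZ = 1\<^sub>m 2"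
  "pX * pY = \<i> \<cdot>\<^sub>m pZ" "pY * pZ = \<i> \<cdot>\<^sub>m pX" "pZ * pX = \<i> \<cdot>\<^sub>m pY"
  "pY * pX = -\<i> \<cdot>\<^sub>m pZ" "pZ * pY = -\<i> \<cdot>\<^sub>m pX" "pX * pZ = -\<i> \<cdot>\<^sub>m pY"
  by (rule eq_matI; auto simp: pauli_defs scalar_prod_def numeral_2_eq_2 less_Suc_eq)+

lemma pY_eq_phase_pX_pZ: "pY = (\<i> \<cdot>\<^sub>m 1\<^sub>m 2) * (pX * pZ)"
  by (rule eq_matI) (auto simp: pauli_defs scalar_prod_def numeral_2_eq_2 less_Suc_eq)

lemma pauli_matrices_mult_closed:
  assumes "a \<in> pauli_matrices" "b \<in> pauli_matrices"
  shows "\<exists>c. \<exists>p \<in> pauli_matrices. a * b = c \<cdot>\<^sub>m p"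
proof -
  have in_pm: "1\<^sub>m 2 \<in> pauli_matrices" "pX \<in> pauli_matrices" "pY \<in> pauli_matrices" "pZ \<in> pauli_matrices"
    unfolding pauli_matrices_def by auto
  have unit: "\<And>p. p \<in> pauli_matrices \<Longrightarrow> 1\<^sub>m 2 * p = 1 \<cdot>\<^sub>m p"
    "\<And>p. p \<in> pauli_matrices \<Longrightarrow> p * 1\<^sub>m 2 = 1 \<cdot>\<^sub>m p"
    using pauli_matrices_carrier by (metis left_mult_one_mat right_mult_one_mat one_smult_mat)+
  have squares: "pX * pX = 1 \<cdot>\<^sub>m 1\<^sub>m 2" "pY * pY = 1 \<cdot>\<^sub>m 1\<^sub>m 2" "pZ * pZ = 1 \<cdot>\<^sub>m 1\<^sub>m 2"
    using pauli_mult_table by simp_all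
  from assms have "(a = 1\<^sub>m 2 \<or> a = pX \<or> a = pY \<or> a = pZ) \<and> (b = 1\<^sub>m 2 \<or> b = pX \<or> b = pY \<or> b = pZ)"
    unfolding pauli_matrices_def by auto
  then show ?thesis
    using in_pm unit squares pauli_mult_table(4-9) by (elim conjE disjE) blast+
qed

lemma pauli_matrix_nonzero_entry:
  assumes "a \<in> pauli_matrices"
  shows "\<exists>i<2. \<exists>j<2. a $$ (i,j) \<noteq> 0"
proof -
  have "a $$ (0,0) \<noteq> 0 \<or> a $$ (0,1) \<noteq> 0"
    using assms unfolding pauli_matrices_def by (auto simp: pauli_defs)
  then show ?thesis by (auto simp: numeral_2_eq_2)
qed

lemma pauli_matrices_smult_eq:
  assumes "a \<in> pauli_matrices" "b \<in> pauli_matrices" "a = c \<cdot>\<^sub>m b"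
  shows "c = 1"
proof -
  have "a $$ (i,j) = c * b $$ (i,j)" if "i < 2" "j < 2" for i j
    using assms(3) that pauli_matrices_carrier[OF assms(2)] by auto
  from this[of 0 0] this[of 0 1] this[of 1 0] this[of 1 1] show ?thesis
    using assms(1,2) unfolding pauli_matrices_def by (auto simp: pauli_defs)
qed

lemma pauli_strings_0: "pauli_strings 0 = {1\<^sub>m 1}"
  unfolding pauli_strings_def by simp

lemma pauli_strings_Suc:
  "pauli_strings (Suc q) = {kron a B | a B. a \<in> pauli_matrices \<and> B \<in> pauli_strings q}"
  unfolding pauli_strings_def pauli_matrices_def by simp

lemma pauli_strings_carrier: "P \<in> pauli_strings q \<Longrightarrow> P \<in> carrier_mat (2^q) (2^q)"
  by (induction q arbitrary: P)
    (auto simp: pauli_strings_0 pauli_strings_Suc dest!: pauli_matrices_carrier)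

lemma one_mat_in_pauli_strings: "1\<^sub>m (2^q) \<in> pauli_strings q"
proof (induction q)
  case (Suc q)
  then have "kron (1\<^sub>m 2) (1\<^sub>m (2^q)) \<in> pauli_strings (Suc q)"
    unfolding pauli_strings_Suc pauli_matrices_def by blast
  then show ?case by (simp add: kron_one_mat)
qed (simp add: pauli_strings_0)

lemma pauli_string_nonzero_entry: "P \<in> pauli_strings q \<Longrightarrow> \<exists>i<2^q. \<exists>j<2^q. P $$ (i,j) \<noteq> 0"
proof (induction q arbitrary: P)
  case (Suc q)
  then obtain a B where P: "P = kron a B" "a \<in> pauli_matrices" "B \<in> pauli_strings q"
    by (auto simp: pauli_strings_Suc)
  obtain i j where a: "i < 2" "j < 2" "a $$ (i,j) \<noteq> 0" using pauli_matrix_nonzero_entry[OF P(2)] by blast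
  obtain k l where B: "k < 2^q" "l < 2^q" "B $$ (k,l) \<noteq> 0" using Suc.IH[OF P(3)] by blast
  have "P $$ (i * 2^q + k, j * 2^q + l) = a $$ (i,j) * B $$ (k,l)"
    unfolding P(1) using pauli_matrices_carrier[OF P(2)] pauli_strings_carrier[OF P(3)] a B
    by (intro index_kron_block)
  moreover have "i * 2^q + k < 2^Suc q" "j * 2^q + l < 2^Suc q"
    using mult_add_less_mult a B by auto
  ultimately show ?case
    using a B by (intro exI[of _ "i * 2^q + k"] conjI exI[of _ "j * 2^q + l"]) auto
qed (auto simp: pauli_strings_0)

lemma pauli_strings_smult_eq:
  "P \<in> pauli_strings q \<Longrightarrow> Q \<in> pauli_strings q \<Longrightarrow> P = c \<cdot>\<^sub>m Q \<Longrightarrow> c = 1"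
proof (induction q arbitrary: P Q c)
  case 0
  then show ?case by (auto simp: pauli_strings_0 dest: arg_cong[where f = "\<lambda>M. M $$ (0,0)"])
next
  case (Suc q)
  obtain a B where P: "P = kron a B" "a \<in> pauli_matrices" "B \<in> pauli_strings q"
    using Suc.prems(1) by (auto simp: pauli_strings_Suc)
  obtain a' B' where Q: "Q = kron a' B'" "a' \<in> pauli_matrices" "B' \<in> pauli_strings q"
    using Suc.prems(2) by (auto simp: pauli_strings_Suc)
  note carriers = pauli_matrices_carrier[OF P(2)] smult_carrier_mat[OF pauli_matrices_carrier[OF Q(2)]]
    pauli_strings_carrier[OF P(3)] pauli_strings_carrier[OF Q(3)]
  have eq: "kron a B = kron (c \<cdot>\<^sub>m a') B'"
    using Suc.prems(3) unfolding P(1) Q(1) kron_smult_left .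
  obtain i j where ij: "i < 2" "j < 2" "a $$ (i,j) \<noteq> 0" using pauli_matrix_nonzero_entry[OF P(2)] by blast
  have "B = ((c \<cdot>\<^sub>m a') $$ (i,j) / a $$ (i,j)) \<cdot>\<^sub>m B'"
    using kron_eq_kron_right_factor[OF carriers eq ij] .
  with Suc.IH[OF P(3) Q(3) this] have "B' = B" by simp
  obtain k l where kl: "k < 2^q" "l < 2^q" "B $$ (k,l) \<noteq> 0" using pauli_string_nonzero_entry[OF P(3)] by blast
  have "a = c \<cdot>\<^sub>m a'"
    using kron_eq_kron_cancel_right[OF carriers(1,2,3) _ kl] eq \<open>B' = B\<close> by simp
  then show ?case using pauli_matrices_smult_eq P(2) Q(2) by blast
qed

lemma pauli_matrices_subset_pauli1_group: "pauli_matrices \<subseteq> pauli1_group"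
proof -
  have "pY \<in> pauli1_group"
    unfolding pY_eq_phase_pX_pZ by (intro pauli1_group.intros)
  then show ?thesis unfolding pauli_matrices_def using pauli1_group.intros by auto
qed

lemma pauli_strings_subset_pauli_group: "pauli_strings q \<subseteq> pauli_group q"
proof -
  have "tensor_power_set S q \<subseteq> tensor_power_set T q" if "S \<subseteq> T" for S T :: "complex mat set"
    using that by (induction q) auto
  then show ?thesis
    using pauli_matrices_subset_pauli1_group
    unfolding pauli_strings_def pauli_group_def pauli_matrices_def by blast
qed

lemma pauli1_group_phase_pauli_matrix:
  "g \<in> pauli1_group \<Longrightarrow> \<exists>c. \<exists>p \<in> pauli_matrices. g = c \<cdot>\<^sub>m p"
proof (induction rule: pauli1_group.induct)
  case geni
  then show ?case unfolding pauli_matrices_def by blast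
next
  case (mult a b)
  then obtain c p d p' where cp: "p \<in> pauli_matrices" "a = c \<cdot>\<^sub>m p" "p' \<in> pauli_matrices" "b = d \<cdot>\<^sub>m p'"
    by blast
  obtain e p'' where e: "p'' \<in> pauli_matrices" "p * p' = e \<cdot>\<^sub>m p''"
    using pauli_matrices_mult_closed[OF cp(1,3)] by blast
  have "a * b = (c * d * e) \<cdot>\<^sub>m p''"
    using cp e(2) smult_mult_smult_mat[OF pauli_matrices_carrier[OF cp(1)] pauli_matrices_carrier[OF cp(3)]]
    by (simp add: smult_smult_mat)
  then show ?case using e(1) by blast
qed (auto simp: pauli_matrices_def intro: exI[of _ 1])

lemma pauli_group_phase_pauli_string:
  "G \<in> pauli_group q \<Longrightarrow> \<exists>c. \<exists>P \<in> pauli_strings q. G = c \<cdot>\<^sub>m P"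
proof (induction q arbitrary: G)
  case 0
  then show ?case by (auto simp: pauli_group_def pauli_strings_0 intro: exI[of _ 1])
next
  case (Suc q)
  then obtain a B where G: "G = kron a B" "a \<in> pauli1_group" "B \<in> pauli_group q"
    unfolding pauli_group_def by auto
  obtain c p where "p \<in> pauli_matrices" "a = c \<cdot>\<^sub>m p" using pauli1_group_phase_pauli_matrix[OF G(2)] by blast
  moreover obtain d P where "P \<in> pauli_strings q" "B = d \<cdot>\<^sub>m P" using Suc.IH[OF G(3)] by blast
  ultimately have "G = (c * d) \<cdot>\<^sub>m kron p P" "kron p P \<in> pauli_strings (Suc q)"
    using G(1) by (auto simp: kron_smult_smult pauli_strings_Suc)
  then show ?case by blast
qed

section \<open>Conjugation by a unitary\<close>

definition Ad :: "complex mat \<Rightarrow> complex mat \<Rightarrow> complex mat" where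
  "Ad C M = C * M * mat_adjoint C"

context
  fixes C :: "complex mat" and n :: nat
  assumes unitary: "unitary_mat n C"
begin

lemma unitary_carrier: "C \<in> carrier_mat n n" "mat_adjoint C \<in> carrier_mat n n"
  and unitary_adjoint_mult: "mat_adjoint C * C = 1\<^sub>m n" "C * mat_adjoint C = 1\<^sub>m n"
  using unitary unfolding unitary_mat_def by (auto intro!: carrier_matI)

lemma Ad_carrier: "M \<in> carrier_mat n n \<Longrightarrow> Ad C M \<in> carrier_mat n n"
  unfolding Ad_def using unitary_carrier by auto

lemma Ad_smult: "M \<in> carrier_mat n n \<Longrightarrow> Ad C (c \<cdot>\<^sub>m M) = c \<cdot>\<^sub>m Ad C M"
  unfolding Ad_def using unitary_carrier
  by (simp add: mult_smult_distrib[of _ n n _ n] mult_smult_assoc_mat[of _ n n _ n])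

lemma Ad_add:
  assumes "A \<in> carrier_mat n n" "B \<in> carrier_mat n n"
  shows "Ad C (A + B) = Ad C A + Ad C B"
  unfolding Ad_def mult_add_distrib_mat[OF unitary_carrier(1) assms]
  using mult_carrier_mat[OF unitary_carrier(1) assms(1)] mult_carrier_mat[OF unitary_carrier(1) assms(2)]
    unitary_carrier(2) by (rule add_mult_distrib_mat)

lemma Ad_minus:
  assumes "A \<in> carrier_mat n n" "B \<in> carrier_mat n n"
  shows "Ad C (A - B) = Ad C A - Ad C B"
  unfolding Ad_def mult_minus_distrib_mat[OF unitary_carrier(1) assms]
  using mult_carrier_mat[OF unitary_carrier(1) assms(1)] mult_carrier_mat[OF unitary_carrier(1) assms(2)]
    unitary_carrier(2) by (rule minus_mult_distrib_mat)

lemma Ad_zero: "Ad C (0\<^sub>m n n) = 0\<^sub>m n n"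
  unfolding Ad_def using unitary_carrier by simp

lemma Ad_one: "Ad C (1\<^sub>m n) = 1\<^sub>m n"
  unfolding Ad_def using unitary_carrier unitary_adjoint_mult by simp

lemma Ad_mult:
  assumes "A \<in> carrier_mat n n" "B \<in> carrier_mat n n"
  shows "Ad C (A * B) = Ad C A * Ad C B"
proof -
  have "Ad C A * Ad C B = C * A * (mat_adjoint C * C) * B * mat_adjoint C"
    unfolding Ad_def using assms unitary_carrier by (simp add: assoc_mult_mat[of _ n n _ n _ n])
  also have "\<dots> = Ad C (A * B)"
    unfolding unitary_adjoint_mult Ad_def using assms unitary_carrier
    by (simp add: assoc_mult_mat[of _ n n _ n _ n])
  finally show ?thesis ..
qed

lemma Ad_cancel:
  assumes "M \<in> carrier_mat n n"
  shows "mat_adjoint C * Ad C M * C = M"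
proof -
  have "mat_adjoint C * Ad C M * C = (mat_adjoint C * C) * M * (mat_adjoint C * C)"
    unfolding Ad_def using assms unitary_carrier by (simp add: assoc_mult_mat[of _ n n _ n _ n])
  then show ?thesis unfolding unitary_adjoint_mult using assms by simp
qed

lemma Ad_eq_smult_Ad:
  assumes "M \<in> carrier_mat n n" "N \<in> carrier_mat n n" "Ad C M = c \<cdot>\<^sub>m Ad C N"
  shows "M = c \<cdot>\<^sub>m N"
  using Ad_cancel[OF assms(1)] Ad_cancel[OF smult_carrier_mat[OF assms(2)]]
  unfolding assms(3) Ad_smult[OF assms(2), symmetric] by simp

context
  fixes \<sigma> \<tau> \<sigma>' \<tau>' :: "complex mat" and a b :: complex
  assumes carrier: "\<sigma> \<in> carrier_mat n n" "\<tau> \<in> carrier_mat n n" "\<sigma>' \<in> carrier_mat n n" "\<tau>' \<in> carrier_mat n n"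
    and nonzero: "a * b \<noteq> 0"
    and Ad_\<sigma>: "Ad C \<sigma> = a \<cdot>\<^sub>m \<sigma>'" and Ad_\<tau>: "Ad C \<tau> = b \<cdot>\<^sub>m \<tau>'"
begin

lemma Ad_mult_proportional:
  "Ad C (\<sigma> * \<tau>) = (a * b) \<cdot>\<^sub>m (\<sigma>' * \<tau>')" "Ad C (\<tau> * \<sigma>) = (a * b) \<cdot>\<^sub>m (\<tau>' * \<sigma>')"
  using Ad_mult[OF carrier(1,2)] Ad_mult[OF carrier(2,1)] Ad_\<sigma> Ad_\<tau>
    smult_mult_smult_mat[OF carrier(3,4)] smult_mult_smult_mat[OF carrier(4,3)]
  by (simp_all add: mult.commute)

lemma Ad_commute_proportional: "\<sigma> * \<tau> = \<tau> * \<sigma> \<Longrightarrow> \<sigma>' * \<tau>' = \<tau>' * \<sigma>'"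
  using Ad_mult_proportional smult_mat_cancel[OF nonzero] by metis

lemma Ad_anticommute_proportional:
  assumes "\<sigma> * \<tau> + \<tau> * \<sigma> = 0\<^sub>m n n"
  shows "\<sigma>' * \<tau>' + \<tau>' * \<sigma>' = 0\<^sub>m n n"
proof -
  have "(a * b) \<cdot>\<^sub>m (\<sigma>' * \<tau>' + \<tau>' * \<sigma>') = Ad C (\<sigma> * \<tau> + \<tau> * \<sigma>)"
    using carrier
    by (simp add: Ad_add Ad_mult_proportional add_smult_distrib_left_mat[of _ n n])
  also have "\<dots> = (a * b) \<cdot>\<^sub>m 0\<^sub>m n n"
    using assms Ad_zero by simp
  finally show ?thesis using smult_mat_cancel[OF nonzero] by blast
qed

end

end

section \<open>Clifford conjugation of normalized Pauli strings\<close>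

lemma clifford_unitary: "C \<in> clifford q \<Longrightarrow> unitary_mat (2^q) C"
  unfolding clifford_def by auto

lemma sigmas_iff:
  "\<sigma> \<in> sigmas q \<longleftrightarrow> (\<exists>P \<in> pauli_strings q. P \<noteq> 1\<^sub>m (2^q) \<and> \<sigma> = complex_of_real (1 / sqrt (2^q)) \<cdot>\<^sub>m P)"
  unfolding sigmas_def by auto

lemma sigmas_carrier: "\<sigma> \<in> sigmas q \<Longrightarrow> \<sigma> \<in> carrier_mat (2^q) (2^q)"
  unfolding sigmas_iff using pauli_strings_carrier by auto

lemma sigmas_smult_eq:
  assumes "\<sigma> \<in> sigmas q" "\<tau> \<in> sigmas q" "\<sigma> = c \<cdot>\<^sub>m \<tau>"
  shows "c = 1"
proof -
  let ?s = "complex_of_real (1 / sqrt (2^q))"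
  obtain P Q where PQ: "P \<in> pauli_strings q" "Q \<in> pauli_strings q" "\<sigma> = ?s \<cdot>\<^sub>m P" "\<tau> = ?s \<cdot>\<^sub>m Q"
    using assms(1,2) unfolding sigmas_iff by blast
  have "?s \<cdot>\<^sub>m P = ?s \<cdot>\<^sub>m (c \<cdot>\<^sub>m Q)"
    using assms(3) unfolding PQ smult_smult_mat by (simp add: mult.commute)
  then have "P = c \<cdot>\<^sub>m Q" by (rule smult_mat_cancel[rotated]) simp
  then show ?thesis using pauli_strings_smult_eq PQ(1,2) by blast
qed

lemma clifford_Ad_sigmas:
  assumes C: "C \<in> clifford q" and \<sigma>: "\<sigma> \<in> sigmas q"
  shows "\<exists>a \<sigma>'. \<sigma>' \<in> sigmas q \<and> a \<noteq> 0 \<and> Ad C \<sigma> = a \<cdot>\<^sub>m \<sigma>'"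
proof -
  let ?s = "complex_of_real (1 / sqrt (2^q))"
  note U = clifford_unitary[OF C]
  obtain P where P: "P \<in> pauli_strings q" "P \<noteq> 1\<^sub>m (2^q)" "\<sigma> = ?s \<cdot>\<^sub>m P"
    using \<sigma> unfolding sigmas_iff by blast
  note P_carrier = pauli_strings_carrier[OF P(1)]
  have "Ad C P \<in> pauli_group q"
    using C pauli_strings_subset_pauli_group P(1) unfolding clifford_def Ad_def by auto
  then obtain c P' where P': "P' \<in> pauli_strings q" "Ad C P = c \<cdot>\<^sub>m P'"
    using pauli_group_phase_pauli_string by blast
  have "c \<noteq> 0"
  proof
    assume "c = 0"
    then have "Ad C P = 0 \<cdot>\<^sub>m Ad C P"
      using P'(2) pauli_strings_carrier[OF P'(1)] Ad_carrier[OF U P_carrier] by auto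
    then have "P = 0 \<cdot>\<^sub>m P" using Ad_eq_smult_Ad[OF U P_carrier P_carrier] by blast
    moreover obtain i j where "i < 2^q" "j < 2^q" "P $$ (i,j) \<noteq> 0"
      using pauli_string_nonzero_entry[OF P(1)] by blast
    ultimately show False using P_carrier by (metis carrier_matD index_smult_mat(1) mult_zero_left)
  qed
  moreover have "P' \<noteq> 1\<^sub>m (2^q)"
  proof
    assume "P' = 1\<^sub>m (2^q)"
    then have "P = c \<cdot>\<^sub>m 1\<^sub>m (2^q)"
      using P'(2) Ad_one[OF U] Ad_eq_smult_Ad[OF U P_carrier one_carrier_mat] by simp
    moreover then have "c = 1" using pauli_strings_smult_eq[OF P(1) one_mat_in_pauli_strings] by blast
    ultimately show False using P(2) by simp
  qed
  moreover have "Ad C \<sigma> = c \<cdot>\<^sub>m (?s \<cdot>\<^sub>m P')"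
    unfolding P(3) Ad_smult[OF U P_carrier] P'(2) smult_smult_mat by (simp add: mult.commute)
  ultimately show ?thesis using P'(1) unfolding sigmas_iff by blast
qed

context
  fixes C q \<sigma> \<tau> \<sigma>' \<tau>' a b
  assumes C: "C \<in> clifford q" and sigmas: "\<sigma> \<in> sigmas q" "\<tau> \<in> sigmas q" "\<sigma>' \<in> sigmas q" "\<tau>' \<in> sigmas q"
    and nonzero: "a \<noteq> 0" "b \<noteq> 0" and Ad_\<sigma>: "Ad C \<sigma> = a \<cdot>\<^sub>m \<sigma>'" and Ad_\<tau>: "Ad C \<tau> = b \<cdot>\<^sub>m \<tau>'"
begin

lemma clifford_Ad_sigmas_neq: "\<sigma> \<noteq> \<tau> \<Longrightarrow> \<sigma>' \<noteq> \<tau>'"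
proof
  assume "\<sigma> \<noteq> \<tau>" "\<sigma>' = \<tau>'"
  then have "Ad C \<sigma> = (a / b) \<cdot>\<^sub>m Ad C \<tau>"
    unfolding Ad_\<sigma> Ad_\<tau> smult_smult_mat using nonzero by simp
  then have "\<sigma> = (a / b) \<cdot>\<^sub>m \<tau>"
    using Ad_eq_smult_Ad[OF clifford_unitary[OF C] sigmas_carrier[OF sigmas(1)] sigmas_carrier[OF sigmas(2)]] by blast
  moreover then have "a / b = 1" using sigmas_smult_eq sigmas(1,2) by blast
  ultimately show False using \<open>\<sigma> \<noteq> \<tau>\<close> by simp
qed

lemmas proportional_images =
  clifford_unitary[OF C] sigmas_carrier[OF sigmas(1)] sigmas_carrier[OF sigmas(2)]
  sigmas_carrier[OF sigmas(3)] sigmas_carrier[OF sigmas(4)] _ Ad_\<sigma> Ad_\<tau>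

lemma C_set_clifford_Ad: "\<sigma> \<in> C_set q \<tau> \<Longrightarrow> \<sigma>' \<in> C_set q \<tau>'"
  using clifford_Ad_sigmas_neq Ad_commute_proportional[OF proportional_images] nonzero sigmas(3)
  unfolding C_set_def by auto

lemma N_set_clifford_Ad: "\<sigma> \<in> N_set q \<tau> \<Longrightarrow> \<sigma>' \<in> N_set q \<tau>'"
  using Ad_anticommute_proportional[OF proportional_images] nonzero sigmas(3)
  unfolding N_set_def by auto

end

section \<open>The two-copy representation\<close>

lemma two_copy_eq_Ad: "two_copy C M = Ad (kron C C) M"
  unfolding two_copy_def Ad_def ..

lemma unitary_kron:
  assumes "unitary_mat n C"
  shows "unitary_mat (n * n) (kron C C)"
proof -
  note C = unitary_carrier[OF assms] unitary_adjoint_mult[OF assms]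
  have "mat_adjoint (kron C C) * kron C C = 1\<^sub>m (n * n)"
    unfolding mat_adjoint_kron kron_mult_kron[OF C(2,2,1,1)] C(3) kron_one_mat ..
  moreover have "kron C C * mat_adjoint (kron C C) = 1\<^sub>m (n * n)"
    unfolding mat_adjoint_kron kron_mult_kron[OF C(1,1,2,2)] C(4) kron_one_mat ..
  ultimately show ?thesis unfolding unitary_mat_def using C(1) by auto
qed

lemma two_copy_kron:
  assumes U: "unitary_mat n C" and A: "A \<in> carrier_mat n n" and B: "B \<in> carrier_mat n n"
  shows "two_copy C (kron A B) = kron (Ad C A) (Ad C B)"
proof -
  note C = unitary_carrier[OF U]
  have "two_copy C (kron A B) = kron (C * A) (C * B) * kron (mat_adjoint C) (mat_adjoint C)"
    unfolding two_copy_def mat_adjoint_kron kron_mult_kron[OF C(1,1) A B] ..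
  also have "\<dots> = kron (Ad C A) (Ad C B)"
    unfolding Ad_def using mult_carrier_mat[OF C(1) A] mult_carrier_mat[OF C(1) B] C(2,2)
    by (rule kron_mult_kron)
  finally show ?thesis .
qed

context
  fixes C :: "complex mat" and n :: nat and \<sigma> \<tau> \<sigma>' \<tau>' :: "complex mat" and a b :: complex
  assumes U: "unitary_mat n C"
    and carrier: "\<sigma> \<in> carrier_mat n n" "\<tau> \<in> carrier_mat n n" "\<sigma>' \<in> carrier_mat n n" "\<tau>' \<in> carrier_mat n n"
    and Ad_\<sigma>: "Ad C \<sigma> = a \<cdot>\<^sub>m \<sigma>'" and Ad_\<tau>: "Ad C \<tau> = b \<cdot>\<^sub>m \<tau>'"
begin

lemma two_copy_kron_proportional:
  "two_copy C (kron \<sigma> \<tau>) = (a * b) \<cdot>\<^sub>m kron \<sigma>' \<tau>'"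
  "two_copy C (kron \<tau> \<sigma>) = (a * b) \<cdot>\<^sub>m kron \<tau>' \<sigma>'"
  using two_copy_kron[OF U carrier(1,2)] two_copy_kron[OF U carrier(2,1)]
  by (simp_all add: Ad_\<sigma> Ad_\<tau> kron_smult_smult mult.commute)

lemma two_copy_S_mat: "two_copy C (S_mat \<sigma> \<tau>) = (a * b) \<cdot>\<^sub>m S_mat \<sigma>' \<tau>'"
proof -
  note UK = unitary_kron[OF U]
  have k: "kron \<sigma> \<tau> \<in> carrier_mat (n * n) (n * n)" "kron \<tau> \<sigma> \<in> carrier_mat (n * n) (n * n)"
    "kron \<sigma>' \<tau>' \<in> carrier_mat (n * n) (n * n)" "kron \<tau>' \<sigma>' \<in> carrier_mat (n * n) (n * n)"
    using carrier by auto
  show ?thesis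
    unfolding two_copy_eq_Ad S_mat_def Ad_smult[OF UK add_carrier_mat[OF k(2)]] Ad_add[OF UK k(1,2)]
      two_copy_kron_proportional[unfolded two_copy_eq_Ad] add_smult_distrib_left_mat[OF k(3,4), symmetric]
      smult_smult_mat by (simp add: mult.commute)
qed

lemma two_copy_A_mat: "two_copy C (A_mat \<sigma> \<tau>) = (a * b) \<cdot>\<^sub>m A_mat \<sigma>' \<tau>'"
proof -
  note UK = unitary_kron[OF U]
  have k: "kron \<sigma> \<tau> \<in> carrier_mat (n * n) (n * n)" "kron \<tau> \<sigma> \<in> carrier_mat (n * n) (n * n)"
    "kron \<sigma>' \<tau>' \<in> carrier_mat (n * n) (n * n)" "kron \<tau>' \<sigma>' \<in> carrier_mat (n * n) (n * n)"
    using carrier by auto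
  show ?thesis
    unfolding two_copy_eq_Ad A_mat_def Ad_smult[OF UK minus_carrier_mat[OF k(2)]] Ad_minus[OF UK k(1,2)]
      two_copy_kron_proportional[unfolded two_copy_eq_Ad] smult_minus_distrib_mat[OF k(3,4), symmetric]
      smult_smult_mat by (simp add: mult.commute)
qed

end

section \<open>Invariant subspaces\<close>

lemma mat_span_carrier:
  assumes "S \<subseteq> carrier_mat n n" "x \<in> mat_span n S"
  shows "x \<in> carrier_mat n n"
  using assms(2) by induction (use assms(1) in auto)

lemma mat_span_linear_image:
  assumes S: "S \<subseteq> carrier_mat n n"
    and f_add: "\<And>x y. x \<in> carrier_mat n n \<Longrightarrow> y \<in> carrier_mat n n \<Longrightarrow> f (x + y) = f x + f y"
    and f_smult: "\<And>c x. x \<in> carrier_mat n n \<Longrightarrow> f (c \<cdot>\<^sub>m x) = c \<cdot>\<^sub>m f x"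
    and f_zero: "f (0\<^sub>m n n) = 0\<^sub>m n n"
    and f_gen: "\<And>s. s \<in> S \<Longrightarrow> f s \<in> mat_span n S"
    and x: "x \<in> mat_span n S"
  shows "f x \<in> mat_span n S"
  using x
proof (induction rule: mat_span.induct)
  case (add x y)
  then show ?case using f_add mat_span_carrier[OF S] mat_span.add by simp
next
  case (smult x c)
  then show ?case using f_smult mat_span_carrier[OF S] mat_span.smult by simp
qed (use f_zero f_gen mat_span.zero in auto)

lemma invariant_space_mat_spanI:
  assumes S: "S \<subseteq> carrier_mat (2^q * 2^q) (2^q * 2^q)"
    and gen: "\<And>C s. C \<in> clifford q \<Longrightarrow> s \<in> S \<Longrightarrow> \<exists>c. \<exists>s' \<in> S. two_copy C s = c \<cdot>\<^sub>m s'"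
  shows "invariant_space q (mat_span (4^q) S)"
proof -
  have "(4::nat)^q = 2^q * 2^q" by (simp add: power_mult_distrib[symmetric])
  moreover have "two_copy C M \<in> mat_span (2^q * 2^q) S"
    if C: "C \<in> clifford q" and M: "M \<in> mat_span (2^q * 2^q) S" for C M
  proof -
    note U = unitary_kron[OF clifford_unitary[OF C]]
    show ?thesis
      unfolding two_copy_eq_Ad
      using S Ad_add[OF U] Ad_smult[OF U] Ad_zero[OF U] _ M
    proof (rule mat_span_linear_image)
      fix s assume "s \<in> S"
      then show "Ad (kron C C) s \<in> mat_span (2^q * 2^q) S"
        using gen[OF C] mat_span.gen mat_span.smult unfolding two_copy_eq_Ad by metis
    qed
  qed
  ultimately show ?thesis unfolding invariant_space_def by simp
qed

lemma sigma0_carrier: "sigma0 q \<in> carrier_mat (2^q) (2^q)"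
  unfolding sigma0_def by simp

lemma clifford_Ad_sigma0: "C \<in> clifford q \<Longrightarrow> Ad C (sigma0 q) = sigma0 q"
  unfolding sigma0_def using Ad_smult[OF clifford_unitary] Ad_one[OF clifford_unitary] by simp

lemma invariant_V_id: "invariant_space q (V_id q)"
  unfolding V_id_def
proof (rule invariant_space_mat_spanI)
  fix C s assume "C \<in> clifford q" "s \<in> {kron (sigma0 q) (sigma0 q)}"
  then have "two_copy C s = 1 \<cdot>\<^sub>m s"
    using two_copy_kron[OF clifford_unitary sigma0_carrier sigma0_carrier] clifford_Ad_sigma0 by simp
  then show "\<exists>c. \<exists>s' \<in> {kron (sigma0 q) (sigma0 q)}. two_copy C s = c \<cdot>\<^sub>m s'"
    using \<open>s \<in> _\<close> by blast
qed (use sigma0_carrier in simp)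

lemma invariant_V_r: "invariant_space q (V_r q)"
  unfolding V_r_def
proof (rule invariant_space_mat_spanI)
  fix C s assume C: "C \<in> clifford q" and "s \<in> {kron (sigma0 q) \<tau> | \<tau>. \<tau> \<in> sigmas q}"
  then obtain \<tau> where \<tau>: "\<tau> \<in> sigmas q" "s = kron (sigma0 q) \<tau>" by blast
  obtain b \<tau>' where \<tau>': "\<tau>' \<in> sigmas q" "Ad C \<tau> = b \<cdot>\<^sub>m \<tau>'" using clifford_Ad_sigmas[OF C \<tau>(1)] by blast
  have "two_copy C s = b \<cdot>\<^sub>m kron (sigma0 q) \<tau>'"
    using two_copy_kron[OF clifford_unitary[OF C] sigma0_carrier sigmas_carrier[OF \<tau>(1)]]
    by (simp add: \<tau>(2) \<tau>'(2) clifford_Ad_sigma0[OF C] kron_smult_right)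
  then show "\<exists>c. \<exists>s' \<in> {kron (sigma0 q) \<tau> | \<tau>. \<tau> \<in> sigmas q}. two_copy C s = c \<cdot>\<^sub>m s'"
    using \<tau>'(1) by blast
qed (use sigma0_carrier sigmas_carrier in auto)

lemma invariant_V_l: "invariant_space q (V_l q)"
  unfolding V_l_def
proof (rule invariant_space_mat_spanI)
  fix C s assume C: "C \<in> clifford q" and "s \<in> {kron \<tau> (sigma0 q) | \<tau>. \<tau> \<in> sigmas q}"
  then obtain \<tau> where \<tau>: "\<tau> \<in> sigmas q" "s = kron \<tau> (sigma0 q)" by blast
  obtain b \<tau>' where \<tau>': "\<tau>' \<in> sigmas q" "Ad C \<tau> = b \<cdot>\<^sub>m \<tau>'" using clifford_Ad_sigmas[OF C \<tau>(1)] by blast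
  have "two_copy C s = b \<cdot>\<^sub>m kron \<tau>' (sigma0 q)"
    using two_copy_kron[OF clifford_unitary[OF C] sigmas_carrier[OF \<tau>(1)] sigma0_carrier]
    by (simp add: \<tau>(2) \<tau>'(2) clifford_Ad_sigma0[OF C] kron_smult_left)
  then show "\<exists>c. \<exists>s' \<in> {kron \<tau> (sigma0 q) | \<tau>. \<tau> \<in> sigmas q}. two_copy C s = c \<cdot>\<^sub>m s'"
    using \<tau>'(1) by blast
qed (use sigma0_carrier sigmas_carrier in auto)

lemma invariant_V_d: "invariant_space q (V_d q)"
  unfolding V_d_def
proof (rule invariant_space_mat_spanI)
  fix C s assume C: "C \<in> clifford q" and "s \<in> {kron \<tau> \<tau> | \<tau>. \<tau> \<in> sigmas q}"
  then obtain \<tau> where \<tau>: "\<tau> \<in> sigmas q" "s = kron \<tau> \<tau>" by blast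
  obtain b \<tau>' where \<tau>': "\<tau>' \<in> sigmas q" "Ad C \<tau> = b \<cdot>\<^sub>m \<tau>'" using clifford_Ad_sigmas[OF C \<tau>(1)] by blast
  have "two_copy C s = (b * b) \<cdot>\<^sub>m kron \<tau>' \<tau>'"
    using two_copy_kron[OF clifford_unitary[OF C] sigmas_carrier[OF \<tau>(1)] sigmas_carrier[OF \<tau>(1)]]
    by (simp add: \<tau>(2) \<tau>'(2) kron_smult_smult)
  then show "\<exists>c. \<exists>s' \<in> {kron \<tau> \<tau> | \<tau>. \<tau> \<in> sigmas q}. two_copy C s = c \<cdot>\<^sub>m s'"
    using \<tau>'(1) by blast
qed (use sigmas_carrier in auto)

lemma invariant_pair_span:
  assumes R_sigmas: "\<And>\<tau>. R \<tau> \<subseteq> sigmas q"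
    and R_clifford: "\<And>C \<sigma> \<tau> \<sigma>' \<tau>' a b. C \<in> clifford q \<Longrightarrow>
      \<sigma> \<in> sigmas q \<Longrightarrow> \<tau> \<in> sigmas q \<Longrightarrow> \<sigma>' \<in> sigmas q \<Longrightarrow> \<tau>' \<in> sigmas q \<Longrightarrow> a \<noteq> 0 \<Longrightarrow> b \<noteq> 0 \<Longrightarrow>
      Ad C \<sigma> = a \<cdot>\<^sub>m \<sigma>' \<Longrightarrow> Ad C \<tau> = b \<cdot>\<^sub>m \<tau>' \<Longrightarrow> \<sigma> \<in> R \<tau> \<Longrightarrow> \<sigma>' \<in> R \<tau>'"
    and F_carrier: "\<And>\<sigma> \<tau>. \<sigma> \<in> carrier_mat (2^q) (2^q) \<Longrightarrow> \<tau> \<in> carrier_mat (2^q) (2^q) \<Longrightarrow>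
      F \<sigma> \<tau> \<in> carrier_mat (2^q * 2^q) (2^q * 2^q)"
    and F_two_copy: "\<And>C \<sigma> \<tau> \<sigma>' \<tau>' a b. unitary_mat (2^q) C \<Longrightarrow>
      \<sigma> \<in> carrier_mat (2^q) (2^q) \<Longrightarrow> \<tau> \<in> carrier_mat (2^q) (2^q) \<Longrightarrow>
      \<sigma>' \<in> carrier_mat (2^q) (2^q) \<Longrightarrow> \<tau>' \<in> carrier_mat (2^q) (2^q) \<Longrightarrow>
      Ad C \<sigma> = a \<cdot>\<^sub>m \<sigma>' \<Longrightarrow> Ad C \<tau> = b \<cdot>\<^sub>m \<tau>' \<Longrightarrow> two_copy C (F \<sigma> \<tau>) = (a * b) \<cdot>\<^sub>m F \<sigma>' \<tau>'"
  shows "invariant_space q (mat_span (4^q) {F \<sigma> \<tau> | \<sigma> \<tau>. \<tau> \<in> sigmas q \<and> \<sigma> \<in> R \<tau>})"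
proof (rule invariant_space_mat_spanI)
  fix C s assume C: "C \<in> clifford q" and "s \<in> {F \<sigma> \<tau> | \<sigma> \<tau>. \<tau> \<in> sigmas q \<and> \<sigma> \<in> R \<tau>}"
  then obtain \<sigma> \<tau> where st: "\<tau> \<in> sigmas q" "\<sigma> \<in> R \<tau>" "s = F \<sigma> \<tau>" by blast
  have \<sigma>: "\<sigma> \<in> sigmas q" using st(2) R_sigmas by blast
  obtain a \<sigma>' where \<sigma>': "\<sigma>' \<in> sigmas q" "a \<noteq> 0" "Ad C \<sigma> = a \<cdot>\<^sub>m \<sigma>'" using clifford_Ad_sigmas[OF C \<sigma>] by blast
  obtain b \<tau>' where \<tau>': "\<tau>' \<in> sigmas q" "b \<noteq> 0" "Ad C \<tau> = b \<cdot>\<^sub>m \<tau>'" using clifford_Ad_sigmas[OF C st(1)] by blast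
  have "\<sigma>' \<in> R \<tau>'" using R_clifford[OF C \<sigma> st(1) \<sigma>'(1) \<tau>'(1) \<sigma>'(2) \<tau>'(2) \<sigma>'(3) \<tau>'(3) st(2)] .
  moreover have "two_copy C s = (a * b) \<cdot>\<^sub>m F \<sigma>' \<tau>'"
    unfolding st(3) using F_two_copy[OF clifford_unitary[OF C]] sigmas_carrier \<sigma> st(1) \<sigma>' \<tau>' by blast
  ultimately show "\<exists>c. \<exists>s' \<in> {F \<sigma> \<tau> | \<sigma> \<tau>. \<tau> \<in> sigmas q \<and> \<sigma> \<in> R \<tau>}. two_copy C s = c \<cdot>\<^sub>m s'"
    using \<tau>'(1) by blast
qed (use F_carrier R_sigmas sigmas_carrier in blast)

lemma S_mat_carrier: "\<sigma> \<in> carrier_mat n n \<Longrightarrow> \<tau> \<in> carrier_mat n n \<Longrightarrow> S_mat \<sigma> \<tau> \<in> carrier_mat (n * n) (n * n)"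
  unfolding S_mat_def by auto

lemma A_mat_carrier: "\<sigma> \<in> carrier_mat n n \<Longrightarrow> \<tau> \<in> carrier_mat n n \<Longrightarrow> A_mat \<sigma> \<tau> \<in> carrier_mat (n * n) (n * n)"
  unfolding A_mat_def by auto

lemma C_set_subset: "C_set q \<tau> \<subseteq> sigmas q"
  unfolding C_set_def by auto

lemma N_set_subset: "N_set q \<tau> \<subseteq> sigmas q"
  unfolding N_set_def by auto

lemmas invariant_pair_span_instances =
  invariant_pair_span[OF C_set_subset C_set_clifford_Ad S_mat_carrier two_copy_S_mat]
  invariant_pair_span[OF N_set_subset N_set_clifford_Ad S_mat_carrier two_copy_S_mat]
  invariant_pair_span[OF C_set_subset C_set_clifford_Ad A_mat_carrier two_copy_A_mat]
  invariant_pair_span[OF N_set_subset N_set_clifford_Ad A_mat_carrier two_copy_A_mat]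

theorem lemma3:
  fixes q :: nat
  assumes "q \<ge> 1"
  shows "\<forall>W \<in> {V_id q, V_r q, V_l q, V_d q, V_S_comm q, V_S_anti q, V_A_comm q, V_A_anti q}.
           invariant_space q W"
  using invariant_V_id invariant_V_r invariant_V_l invariant_V_d invariant_pair_span_instances
  unfolding V_S_comm_def V_S_anti_def V_A_comm_def V_A_anti_def by auto

end
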